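(* Let $V$ be a compact subset of $\mathcal{A}_0$ such that $V^T$ is complete. Then $$V^{**}=(V^T)^{\perp}.$$
   Context: $D=\{z:|z|<1\}$, $\overline D$ its closure. $\mathcal{A}$ is the space of functions $f(z)=\sum_{k\ge0}a_k(f)z^k$ analytic in $D$, with the topology of locally uniform convergence; $\mathcal{A}_0=\{f\in\mathcal{A}: a_0(f)=1\}$. $\mathcal{A}(\overline D)$ is the set of functions analytic in some disk $\{|z|<R\}$ with $R>1$, and $\mathcal{A}_0(\overline D)=\{g\in\mathcal{A}(\overline D):a_0(g)=1\}$. The Hadamard product is $(f*g)(z)=\sum_{k\ge0}a_k(f)a_k(g)z^k$. For $V\subset\mathcal{A}_0$, $V^*=\{g\in\mathcal{A}_0:(f*g)(z)\ne0 \ \forall z\in D,\ \forall f\in V\}$, $V^{**}=(V^* )^*$, and $V^T=\{g\in\mathcal{A}_0(\overline D): (f*g)(1)\ne0 \ \forall f\in V\}$. For $U\subset\mathcal{A}_0(\overline D)$, $U^{\perp}=\{h\in\mathcal{A}_0:(g*h)(1)\ne0\ \forall g\in U\}$. For $x\in\overline D$, $(P_xf)(z)=f(xz)$; a set $W$ is complete if $P_xf\in W$ for all $f\in W$, $x\in\overline D$. *)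

theory Defs
  imports "HOL-Analysis.Analysis"
begin

text \<open>Elements of the function spaces are represented by their Taylor coefficient
  sequences at 0:  a function f(z) = sum_k a_k z^k is the sequence a.\<close>

definition pser :: "(nat \<Rightarrow> complex) \<Rightarrow> complex \<Rightarrow> complex" where
  "pser a z = (\<Sum>k. a k * z ^ k)"

definition A_space :: "(nat \<Rightarrow> complex) set" where
  "A_space = {a. \<forall>z. norm z < 1 \<longrightarrow> summable (\<lambda>k. a k * z ^ k)}"

definition A0 :: "(nat \<Rightarrow> complex) set" where
  "A0 = {a \<in> A_space. a 0 = 1}"

definition A_cl :: "(nat \<Rightarrow> complex) set" where
  "A_cl = {a. \<exists>R>1. \<forall>z. norm z < R \<longrightarrow> summable (\<lambda>k. a k * z ^ k)}"

definition A0_cl :: "(nat \<Rightarrow> complex) set" where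
  "A0_cl = {a \<in> A_cl. a 0 = 1}"

definition hadamard :: "(nat \<Rightarrow> complex) \<Rightarrow> (nat \<Rightarrow> complex) \<Rightarrow> (nat \<Rightarrow> complex)" where
  "hadamard a b = (\<lambda>k. a k * b k)"

definition dual :: "(nat \<Rightarrow> complex) set \<Rightarrow> (nat \<Rightarrow> complex) set" where
  "dual V = {g \<in> A0. \<forall>f\<in>V. \<forall>z. norm z < 1 \<longrightarrow> pser (hadamard f g) z \<noteq> 0}"

definition dualT :: "(nat \<Rightarrow> complex) set \<Rightarrow> (nat \<Rightarrow> complex) set" where
  "dualT V = {g \<in> A0_cl. \<forall>f\<in>V. pser (hadamard f g) 1 \<noteq> 0}"

definition perp :: "(nat \<Rightarrow> complex) set \<Rightarrow> (nat \<Rightarrow> complex) set" where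
  "perp U = {h \<in> A0. \<forall>g\<in>U. pser (hadamard g h) 1 \<noteq> 0}"

text \<open>(P_x f)(z) = f(xz), i.e. coefficients a_k x^k.\<close>
definition Pop :: "complex \<Rightarrow> (nat \<Rightarrow> complex) \<Rightarrow> (nat \<Rightarrow> complex)" where
  "Pop x a = (\<lambda>k. a k * x ^ k)"

definition complete_set :: "(nat \<Rightarrow> complex) set \<Rightarrow> bool" where
  "complete_set W \<longleftrightarrow> (\<forall>f\<in>W. \<forall>x. norm x \<le> 1 \<longrightarrow> Pop x f \<in> W)"

definition loc_unif_lim :: "(nat \<Rightarrow> nat \<Rightarrow> complex) \<Rightarrow> (nat \<Rightarrow> complex) \<Rightarrow> bool" where
  "loc_unif_lim F f \<longleftrightarrow> (\<forall>r. 0 < r \<and> r < 1 \<longrightarrow>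
      uniform_limit (cball 0 r) (\<lambda>n z. pser (F n) z) (pser f) sequentially)"

text \<open>Compactness in A for the (metrizable) topology of locally uniform convergence,
  expressed as sequential compactness.\<close>
definition compact_A :: "(nat \<Rightarrow> complex) set \<Rightarrow> bool" where
  "compact_A V \<longleftrightarrow> V \<subseteq> A_space \<and>
     (\<forall>F::nat \<Rightarrow> nat \<Rightarrow> complex. (\<forall>n. F n \<in> V) \<longrightarrow>
        (\<exists>f\<in>V. \<exists>s::nat \<Rightarrow> nat. strict_mono s \<and> loc_unif_lim (F \<circ> s) f))"

end

theory Submission
  imports Defs "HOL-Complex_Analysis.Complex_Analysis"
begin

text \<open>
  For the easy inclusion, a function g of V* is turned into the elements P_z g of V^T, |z| < 1,
  since (f * P_z g)(1) = (f * g)(z).  Conversely, let h \<in> V** and g \<in> V^T.  Completeness of V^T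
  makes f * g zero-free on the closed unit disk for every f \<in> V, and compactness of V together
  with the joint continuity of (f, x) \<mapsto> (f * g)(x) (Tannery's theorem, with Cauchy's coefficient
  estimates) pushes this to a disk of radius \<rho> > 1 on which g is still analytic.  Then
  P_\<rho> g \<in> V*, and (g * h)(1) = (P_\<rho> g * h)(1/\<rho>) \<noteq> 0.
\<close>

lemma Pop_mult_power: "Pop x g k * w ^ k = g k * (x * w) ^ k"
  by (simp add: Pop_def power_mult_distrib mult_ac)

lemma pser_hadamard_Pop_right: "pser (hadamard f (Pop x g)) z = pser (hadamard f g) (x * z)"
  by (simp add: pser_def hadamard_def Pop_def power_mult_distrib mult_ac)

lemma pser_hadamard_Pop_left: "pser (hadamard (Pop x g) h) z = pser (hadamard g h) (x * z)"
  by (simp add: pser_def hadamard_def Pop_def power_mult_distrib mult_ac)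

lemma Pop_in_A0_cl:
  assumes g: "g \<in> A0" and z: "norm z < 1"
  shows "Pop z g \<in> A0_cl"
proof -
  define R where "R = (if z = 0 then 2 else 1 / norm z)"
  have "R > 1" using z by (auto simp: R_def field_simps)
  moreover have "summable (\<lambda>k. Pop z g k * w ^ k)" if "norm w < R" for w
  proof -
    have "norm (z * w) < 1"
      using that z by (cases "z = 0") (auto simp: R_def norm_mult field_simps)
    then show ?thesis using g by (simp add: Pop_mult_power A0_def A_space_def)
  qed
  ultimately show ?thesis using g by (auto simp: A0_cl_def A_cl_def A0_def Pop_def)
qed

lemma Pop_in_A0:
  assumes g: "\<And>z. norm z < R \<Longrightarrow> summable (\<lambda>k. g k * z ^ k)" "g 0 = 1"
    and x: "norm x \<le> R" and R: "0 < R"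
  shows "Pop x g \<in> A0"
proof -
  have "summable (\<lambda>k. Pop x g k * z ^ k)" if "norm z < 1" for z
  proof -
    have "norm (x * z) \<le> R * norm z"
      using x by (simp add: norm_mult mult_right_mono)
    also have "\<dots> < R" using that R by simp
    finally have "norm (x * z) < R" .
    then show ?thesis using g(1) by (simp add: Pop_mult_power)
  qed
  then show ?thesis using g(2) by (simp add: A0_def A_space_def Pop_def)
qed

lemma perp_dualT_subset_dual_dual: "perp (dualT V) \<subseteq> dual (dual V)"
proof
  fix h assume h: "h \<in> perp (dualT V)"
  have "pser (hadamard g h) z \<noteq> 0" if g: "g \<in> dual V" and z: "norm z < 1" for g z
  proof -
    have "Pop z g \<in> dualT V"
      using g z Pop_in_A0_cl[of g z] by (auto simp: dual_def dualT_def pser_hadamard_Pop_right)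
    then have "pser (hadamard (Pop z g) h) 1 \<noteq> 0" using h by (simp add: perp_def)
    then show ?thesis by (simp add: pser_hadamard_Pop_left)
  qed
  then show "h \<in> dual (dual V)" using h by (auto simp: dual_def perp_def)
qed

lemma summable_imp_coeff_bound:
  fixes a :: "nat \<Rightarrow> complex"
  assumes "summable (\<lambda>k. a k * z ^ k)"
  shows "\<exists>C\<ge>0. \<forall>k. norm (a k) * norm z ^ k \<le> C"
proof -
  have "Bseq (\<lambda>k. a k * z ^ k)"
    using summable_LIMSEQ_zero[OF assms] by (intro convergent_imp_Bseq convergentI)
  then show ?thesis by (auto simp: Bseq_def norm_mult norm_power intro: less_imp_le)
qed

lemma A_space_conv_radius: "a \<in> A_space \<Longrightarrow> conv_radius a \<ge> 1"
  by (rule conv_radius_geI_ex') (auto simp: A_space_def)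

lemma A_space_diff: "a \<in> A_space \<Longrightarrow> b \<in> A_space \<Longrightarrow> (\<lambda>k. a k - b k) \<in> A_space"
  unfolding A_space_def by (auto simp: left_diff_distrib intro: summable_diff)

lemma pser_diff:
  "a \<in> A_space \<Longrightarrow> b \<in> A_space \<Longrightarrow> norm z < 1 \<Longrightarrow> pser (\<lambda>k. a k - b k) z = pser a z - pser b z"
  unfolding A_space_def pser_def by (simp add: left_diff_distrib suminf_diff)

lemma A_space_Cauchy_inequality:
  assumes a: "a \<in> A_space" and r: "0 < r" "r < 1"
    and B: "\<And>z. norm z = r \<Longrightarrow> norm (pser a z) \<le> B"
  shows "norm (a n) \<le> B / r ^ n"
proof -
  define F where "F = Abs_fps a"
  have rad: "fps_conv_radius F \<ge> 1"
    using A_space_conv_radius[OF a] by (simp add: F_def fps_conv_radius_def)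
  have sub: "cball (0::complex) r \<subseteq> eball 0 (fps_conv_radius F)"
  proof
    fix z :: complex assume "z \<in> cball 0 r"
    then have "ereal (norm z) < 1" using r by auto
    with rad have "ereal (norm z) < fps_conv_radius F" by (rule order.strict_trans2[rotated])
    then show "z \<in> eball 0 (fps_conv_radius F)" by (simp add: eball_def)
  qed
  have "a n = (deriv ^^ n) (eval_fps F) 0 / fact n"
    using fps_nth_conv_deriv[of F n] less_le_trans[OF _ rad, of 0] by (simp add: F_def)
  moreover have "norm ((deriv ^^ n) (eval_fps F) 0) \<le> fact n * B / r ^ n"
  proof (rule Cauchy_inequality)
    show "eval_fps F holomorphic_on ball 0 r"
      using sub by (intro holomorphic_on_eval_fps) auto
    show "continuous_on (cball 0 r) (eval_fps F)"
      by (rule continuous_on_subset[OF continuous_on_eval_fps sub])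
    show "norm (eval_fps F x) \<le> B" if "norm (0 - x) = r" for x
      using B[of x] that by (simp add: F_def eval_fps_def pser_def)
  qed (use r in auto)
  ultimately have "norm (a n) \<le> (fact n * B / r ^ n) / fact n"
    by (metis divide_right_mono norm_divide norm_fact fact_ge_zero)
  then show ?thesis by simp
qed

context
  fixes G :: "nat \<Rightarrow> nat \<Rightarrow> complex" and f :: "nat \<Rightarrow> complex"
  assumes G: "\<And>n. G n \<in> A_space" and f: "f \<in> A_space" and lim: "loc_unif_lim G f"
begin

lemma loc_unif_lim_coeff_estimate:
  assumes r: "0 < r" "r < 1" and e: "0 < e"
  shows "eventually (\<lambda>n. \<forall>k. norm (G n k - f k) \<le> e / r ^ k) sequentially"
proof -
  have "uniform_limit (cball 0 r) (\<lambda>n. pser (G n)) (pser f) sequentially"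
    using lim r by (auto simp: loc_unif_lim_def)
  then have "eventually (\<lambda>n. \<forall>z\<in>cball 0 r. dist (pser (G n) z) (pser f z) < e) sequentially"
    using e by (auto simp: uniform_limit_iff)
  then show ?thesis
  proof eventually_elim
    case (elim n)
    show ?case
    proof
      fix k
      show "norm (G n k - f k) \<le> e / r ^ k"
      proof (rule A_space_Cauchy_inequality[OF A_space_diff[OF G f] r])
        fix z :: complex assume z: "norm z = r"
        then have "pser (\<lambda>k. G n k - f k) z = pser (G n) z - pser f z"
          using G f r by (intro pser_diff) auto
        then show "norm (pser (\<lambda>k. G n k - f k) z) \<le> e"
          using elim[rule_format, of z] z by (simp add: dist_norm)
      qed
    qed
  qed
qed

lemma loc_unif_lim_coeff_tendsto: "(\<lambda>n. G n k) \<longlonglongrightarrow> f k"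
proof (rule tendstoI)
  fix e :: real assume e: "e > 0"
  define r :: real where "r = 1 / 2"
  have "eventually (\<lambda>n. \<forall>j. norm (G n j - f j) \<le> (e * r ^ k / 2) / r ^ j) sequentially"
    using e by (intro loc_unif_lim_coeff_estimate) (auto simp: r_def)
  then show "eventually (\<lambda>n. dist (G n k) (f k) < e) sequentially"
  proof eventually_elim
    case (elim n)
    then have "norm (G n k - f k) \<le> (e * r ^ k / 2) / r ^ k" by blast
    then show ?case using e by (simp add: r_def dist_norm)
  qed
qed

lemma loc_unif_lim_coeff_bound:
  assumes r: "0 < r" "r < 1"
  shows "\<exists>C\<ge>0. eventually (\<lambda>n. \<forall>k. norm (G n k) \<le> C / r ^ k) sequentially"
proof -
  obtain Cf where "0 \<le> Cf" and Cf: "\<And>k. norm (f k) * r ^ k \<le> Cf"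
    using summable_imp_coeff_bound[of f "of_real r"] f r by (force simp: A_space_def)
  moreover have "eventually (\<lambda>n. \<forall>k. norm (G n k) \<le> (1 + Cf) / r ^ k) sequentially"
    using loc_unif_lim_coeff_estimate[OF r zero_less_one]
  proof eventually_elim
    case (elim n)
    show ?case
    proof
      fix k
      have "norm (G n k) \<le> norm (G n k - f k) + norm (f k)"
        using norm_triangle_ineq[of "G n k - f k" "f k"] by simp
      also have "\<dots> \<le> 1 / r ^ k + Cf / r ^ k"
        using elim Cf[of k] r by (intro add_mono) (auto simp: field_simps)
      finally show "norm (G n k) \<le> (1 + Cf) / r ^ k" by (simp add: add_divide_distrib)
    qed
  qed
  ultimately show ?thesis by (metis add_nonneg_nonneg zero_le_one)
qed

lemma tendsto_pser_hadamard:
  assumes g: "\<And>z. norm z < R \<Longrightarrow> summable (\<lambda>k. g k * z ^ k)"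
    and Y: "Y \<longlonglongrightarrow> x" and Y_le: "\<And>n. norm (Y n) \<le> \<rho>" and "\<rho> < R"
  shows "(\<lambda>n. pser (hadamard (G n) g) (Y n)) \<longlonglongrightarrow> pser (hadamard f g) x"
proof -
  have "0 \<le> \<rho>" using norm_ge_zero Y_le[of 0] by (rule order_trans)
  define q where "q = (\<rho> + R) / 2"
  define r where "r = (1 + \<rho> / q) / 2"
  have q: "\<rho> < q" "q < R" "0 < q" using \<open>0 \<le> \<rho>\<close> \<open>\<rho> < R\<close> by (auto simp: q_def)
  then have r: "0 < r" "r < 1" "\<rho> < r * q" using \<open>0 \<le> \<rho>\<close> by (auto simp: r_def field_simps)
  obtain Cg where "0 \<le> Cg" and Cg: "\<And>k. norm (g k) * q ^ k \<le> Cg"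
    using summable_imp_coeff_bound[OF g[of "of_real q"]] q by auto
  obtain C where "0 \<le> C" and C: "eventually (\<lambda>n. \<forall>k. norm (G n k) \<le> C / r ^ k) sequentially"
    using loc_unif_lim_coeff_bound[OF r(1,2)] by blast
  \<comment> \<open>The coefficients of G n are eventually O(r^-k) and those of g are O(q^-k); since
    \<rho> < r q, a geometric series dominates the terms of the Hadamard products at Y n.\<close>
  define M where "M k = C * Cg * (\<rho> / (r * q)) ^ k" for k
  have "summable M"
    unfolding M_def using r q \<open>0 \<le> \<rho>\<close> by (intro summable_mult summable_geometric) auto
  moreover have "eventually (\<lambda>(k, n). norm (G n k * g k * Y n ^ k) \<le> M k) (at_top \<times>\<^sub>F sequentially)"
  proof -
    have "norm (G n k * g k * Y n ^ k) \<le> M k" if "\<forall>k. norm (G n k) \<le> C / r ^ k" for n k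
    proof -
      have "norm (G n k * g k * Y n ^ k) = norm (G n k) * norm (g k) * norm (Y n) ^ k"
        by (simp add: norm_mult norm_power)
      also have "\<dots> \<le> (C / r ^ k) * (Cg / q ^ k) * \<rho> ^ k"
        using that Cg[of k] Y_le[of n] q r \<open>0 \<le> C\<close> \<open>0 \<le> Cg\<close>
        by (intro mult_mono power_mono) (auto simp: field_simps)
      also have "\<dots> = M k"
        by (simp add: M_def power_divide power_mult_distrib)
      finally show ?thesis .
    qed
    then have "eventually (\<lambda>n. \<forall>k. norm (G n k * g k * Y n ^ k) \<le> M k) sequentially"
      using C by (auto elim: eventually_mono)
    then have "eventually (\<lambda>(_ :: nat, n). \<forall>k. norm (G n k * g k * Y n ^ k) \<le> M k) (at_top \<times>\<^sub>F sequentially)"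
      by (subst eventually_prod2) simp_all
    then show ?thesis by (rule eventually_mono) auto
  qed
  moreover have "(\<lambda>n. G n k * g k * Y n ^ k) \<longlonglongrightarrow> f k * g k * x ^ k" for k
    by (intro tendsto_intros loc_unif_lim_coeff_tendsto Y)
  ultimately have "(\<lambda>n. \<Sum>k. G n k * g k * Y n ^ k) \<longlonglongrightarrow> (\<Sum>k. f k * g k * x ^ k)"
    using tannerys_theorem[of "\<lambda>k n. G n k * g k * Y n ^ k"] by simp
  then show ?thesis by (simp add: pser_def hadamard_def)
qed

end

lemma compact_A_cball_subseq:
  fixes X :: "nat \<Rightarrow> complex"
  assumes V: "compact_A V" and F: "\<And>n. F n \<in> V" and X: "\<And>n. norm (X n) \<le> b"
  obtains f x u where "f \<in> V" "strict_mono u" "loc_unif_lim (F \<circ> u) f" "(X \<circ> u) \<longlonglongrightarrow> x"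
proof -
  have "\<forall>n. X n \<in> cball 0 b" using X by simp
  then obtain x s where s: "strict_mono s" "(X \<circ> s) \<longlonglongrightarrow> x"
    using seq_compactE[OF compact_imp_seq_compact[OF compact_cball]] by metis
  obtain f t where "f \<in> V" "strict_mono t" "loc_unif_lim (F \<circ> s \<circ> t) f"
    using V F unfolding compact_A_def by (metis comp_apply)
  moreover have "(X \<circ> (s \<circ> t)) \<longlonglongrightarrow> x"
    using LIMSEQ_subseq_LIMSEQ[OF s(2) \<open>strict_mono t\<close>] by (simp add: o_assoc)
  ultimately show ?thesis
    using s(1) by (intro that[of f "s \<circ> t" x]) (auto simp: o_assoc intro: strict_mono_o)
qed

lemma compact_A_hadamard_nonvanishing_beyond_unit_disk:
  assumes V: "compact_A V"
    and g: "\<And>z. norm z < R \<Longrightarrow> summable (\<lambda>k. g k * z ^ k)" and "1 < R"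
    and nonzero: "\<And>f x. f \<in> V \<Longrightarrow> norm x \<le> 1 \<Longrightarrow> pser (hadamard f g) x \<noteq> 0"
  shows "\<exists>\<rho>>1. \<rho> < R \<and> (\<forall>f\<in>V. \<forall>x. norm x \<le> \<rho> \<longrightarrow> pser (hadamard f g) x \<noteq> 0)"
proof (rule ccontr)
  assume no_disk: "\<not> ?thesis"
  define d where "d = (R - 1) / 2"
  define \<rho> where "\<rho> n = 1 + d * inverse (real (Suc n))" for n
  have "0 < d" "1 + d < R" using \<open>1 < R\<close> by (simp_all add: d_def field_simps)
  have "inverse (real (Suc n)) \<le> 1" for n by (simp add: inverse_le_1_iff)
  then have \<rho>: "1 < \<rho> n" "\<rho> n \<le> 1 + d" for n
    using \<open>0 < d\<close> mult_left_le by (auto simp: \<rho>_def)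
  have "\<exists>f x. f \<in> V \<and> norm x \<le> \<rho> n \<and> pser (hadamard f g) x = 0" for n
  proof -
    have "\<rho> n < R" using \<rho>(2)[of n] \<open>1 + d < R\<close> by linarith
    then show ?thesis using no_disk \<rho>(1)[of n] by blast
  qed
  then obtain F X where F: "\<And>n. F n \<in> V" and X: "\<And>n. norm (X n) \<le> \<rho> n"
    and zero: "\<And>n. pser (hadamard (F n) g) (X n) = 0"
    by metis
  have X_le: "norm (X n) \<le> 1 + d" for n using X[of n] \<rho>(2)[of n] by linarith
  obtain f x u where f: "f \<in> V" and u: "strict_mono u"
    and lim: "loc_unif_lim (F \<circ> u) f" and X_lim: "(X \<circ> u) \<longlonglongrightarrow> x"
    using compact_A_cball_subseq[OF V F X_le] .
  have "\<rho> \<longlonglongrightarrow> 1 + d * 0"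
    unfolding \<rho>_def by (intro tendsto_intros LIMSEQ_inverse_real_of_nat)
  then have "(\<rho> \<circ> u) \<longlonglongrightarrow> 1"
    using LIMSEQ_subseq_LIMSEQ[OF _ u] by simp
  then have "norm x \<le> 1"
    using X by (intro tendsto_le[OF _ _ tendsto_norm[OF X_lim]]) auto
  have "V \<subseteq> A_space" using V by (simp add: compact_A_def)
  have "(\<lambda>n. pser (hadamard ((F \<circ> u) n) g) ((X \<circ> u) n)) \<longlonglongrightarrow> pser (hadamard f g) x"
  proof (rule tendsto_pser_hadamard[where R = R and \<rho> = "1 + d", OF _ _ lim g X_lim])
    show "(F \<circ> u) n \<in> A_space" for n using F \<open>V \<subseteq> A_space\<close> by auto
    show "f \<in> A_space" using f \<open>V \<subseteq> A_space\<close> by auto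
    show "norm ((X \<circ> u) n) \<le> 1 + d" for n using X_le by simp
  qed (simp_all add: \<open>1 + d < R\<close>)
  then have "pser (hadamard f g) x = 0"
    using zero by (simp add: LIMSEQ_const_iff)
  with nonzero[OF f \<open>norm x \<le> 1\<close>] show False ..
qed

lemma dual_dual_subset_perp_dualT:
  assumes V: "compact_A V" and complete: "complete_set (dualT V)"
  shows "dual (dual V) \<subseteq> perp (dualT V)"
proof
  fix h assume h: "h \<in> dual (dual V)"
  have "pser (hadamard g h) 1 \<noteq> 0" if g: "g \<in> dualT V" for g
  proof -
    obtain R where "1 < R" and g_summable: "\<And>z. norm z < R \<Longrightarrow> summable (\<lambda>k. g k * z ^ k)"
      and "g 0 = 1"
      using g by (auto simp: dualT_def A0_cl_def A_cl_def)
    have "pser (hadamard f g) x \<noteq> 0" if "f \<in> V" "norm x \<le> 1" for f x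
    proof -
      have "Pop x g \<in> dualT V" using complete g that(2) by (auto simp: complete_set_def)
      then show ?thesis using that(1) by (auto simp: dualT_def pser_hadamard_Pop_right)
    qed
    then obtain \<rho> where \<rho>: "1 < \<rho>" "\<rho> < R"
      and nonzero: "\<And>f x. f \<in> V \<Longrightarrow> norm x \<le> \<rho> \<Longrightarrow> pser (hadamard f g) x \<noteq> 0"
      using compact_A_hadamard_nonvanishing_beyond_unit_disk[OF V g_summable \<open>1 < R\<close>] by blast
    have "Pop (of_real \<rho>) g \<in> dual V"
    proof -
      have "Pop (of_real \<rho>) g \<in> A0"
        using g_summable \<open>g 0 = 1\<close> \<rho> by (intro Pop_in_A0) auto
      moreover have "norm (of_real \<rho> * z) \<le> \<rho>" if "norm z < 1" for z :: complex
        using that \<rho> by (simp add: norm_mult)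
      ultimately show ?thesis using nonzero by (auto simp: dual_def pser_hadamard_Pop_right)
    qed
    moreover have "norm (1 / complex_of_real \<rho>) < 1" using \<rho> by (simp add: norm_divide)
    ultimately have "pser (hadamard (Pop (of_real \<rho>) g) h) (1 / of_real \<rho>) \<noteq> 0"
      using h by (auto simp: dual_def)
    then show ?thesis using \<rho> by (simp add: pser_hadamard_Pop_left)
  qed
  then show "h \<in> perp (dualT V)" using h by (auto simp: dual_def perp_def)
qed

theorem theorem3:
  assumes "V \<subseteq> A0" and "compact_A V" and "complete_set (dualT V)"
  shows "dual (dual V) = perp (dualT V)"
proof
  show "dual (dual V) \<subseteq> perp (dualT V)"
    using assms(2,3) by (rule dual_dual_subset_perp_dualT)
  show "perp (dualT V) \<subseteq> dual (dual V)"
    by (rule perp_dualT_subset_dual_dual)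
qed

end
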